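(* Let $V$ be a finite set with $|V|\ge 2$, let $A$ be a real symmetric matrix indexed by $V$, and let $(X,Y)$ be a separation of $A$. If $x\in X\setminus Y$ is a simplicial vertex of the principal submatrix $A[X]$, then $x$ is a simplicial vertex of $A$.
   Context: $\min A=\min\{A_{xy}:x\ne y\in V\}$. A separation of $A$ is a pair $(X,Y)$ of subsets of $V$ with $X\cup Y=V$, $X\setminus Y\neq\emptyset$, $Y\setminus X\ne\emptyset$, and $A_{xy}=\min A$ for all $x\in X\setminus Y$, $y\in Y\setminus X$. $A[X]$ denotes the principal submatrix of $A$ indexed by $X$. An element $v$ is simplicial in a symmetric matrix $B$ indexed by $U$ if $B_{yz}\ge\min\{B_{vy},B_{vz}\}$ for all distinct $y,z\in U\setminus\{v\}$. *)

theory Defs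
  imports Complex_Main
begin

text \<open>A real symmetric matrix indexed by a finite set V is a function
  A :: 'a => 'a => real, considered on V x V only.\<close>

definition sym_matrix :: "'a set \<Rightarrow> ('a \<Rightarrow> 'a \<Rightarrow> real) \<Rightarrow> bool" where
  "sym_matrix V A \<longleftrightarrow> (\<forall>x\<in>V. \<forall>y\<in>V. A x y = A y x)"

definition min_entry :: "'a set \<Rightarrow> ('a \<Rightarrow> 'a \<Rightarrow> real) \<Rightarrow> real" where
  "min_entry V A = Min {A x y | x y. x \<in> V \<and> y \<in> V \<and> x \<noteq> y}"

definition separation :: "'a set \<Rightarrow> ('a \<Rightarrow> 'a \<Rightarrow> real) \<Rightarrow> 'a set \<Rightarrow> 'a set \<Rightarrow> bool" where
  "separation V A X Y \<longleftrightarrow> X \<subseteq> V \<and> Y \<subseteq> V \<and> X \<union> Y = V \<and> X - Y \<noteq> {} \<and> Y - X \<noteq> {} \<and>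
     (\<forall>x\<in>X - Y. \<forall>y\<in>Y - X. A x y = min_entry V A)"

text \<open>The principal submatrix A[X] is A restricted to X x X; so being simplicial in
  A[X] is being simplicial in A with index set X.\<close>
definition simplicial :: "'a set \<Rightarrow> ('a \<Rightarrow> 'a \<Rightarrow> real) \<Rightarrow> 'a \<Rightarrow> bool" where
  "simplicial U B v \<longleftrightarrow> v \<in> U \<and>
     (\<forall>y\<in>U - {v}. \<forall>z\<in>U - {v}. y \<noteq> z \<longrightarrow> B y z \<ge> min (B v y) (B v z))"

end

theory Submission
  imports Defs
begin

text \<open>If y lies outside X then y \<in> Y - X, so A x y = min A is the smallest off-diagonal
  entry and the simplicial inequality at the pair y, z holds trivially; otherwise
  both indices lie in X and simpliciality in A[X] applies.\<close>

lemma min_entry_le: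
  assumes "finite V" "y \<in> V" "z \<in> V" "y \<noteq> z"
  shows "min_entry V A \<le> A y z"
proof -
  have "{A x y | x y. x \<in> V \<and> y \<in> V \<and> x \<noteq> y} \<subseteq> (\<lambda>(x, y). A x y) ` (V \<times> V)"
    by auto
  then have "finite {A x y | x y. x \<in> V \<and> y \<in> V \<and> x \<noteq> y}"
    using assms(1) finite_subset by blast
  moreover have "A y z \<in> {A x y | x y. x \<in> V \<and> y \<in> V \<and> x \<noteq> y}"
    using assms by blast
  ultimately show ?thesis
    unfolding min_entry_def by simp
qed

lemma separation_entry_eq_min_entry:
  assumes "separation V A X Y" "x \<in> X - Y" "y \<in> V - X"
  shows "A x y = min_entry V A"
  using assms unfolding separation_def by auto

lemma simplicial_pair_if_min_entry:
  assumes "finite V" "y \<in> V" "z \<in> V" "y \<noteq> z"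
    and "A x y = min_entry V A \<or> A x z = min_entry V A"
  shows "min (A x y) (A x z) \<le> A y z"
  using assms min_entry_le[OF assms(1-4), of A] by linarith

theorem lemma7:
  fixes V :: "'a set" and A :: "'a \<Rightarrow> 'a \<Rightarrow> real" and X Y :: "'a set" and x :: 'a
  assumes "finite V" and "card V \<ge> 2"
    and "sym_matrix V A"
    and "separation V A X Y"
    and "x \<in> X - Y"
    and "simplicial X A x"
  shows "simplicial V A x"
  unfolding simplicial_def
proof (intro conjI ballI impI)
  show "x \<in> V"
    using assms(4,5) unfolding separation_def by auto
next
  fix y z
  assume y: "y \<in> V - {x}" and z: "z \<in> V - {x}" and "y \<noteq> z"
  show "min (A x y) (A x z) \<le> A y z"
  proof (cases "y \<in> X \<and> z \<in> X")
    case True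
    then show ?thesis
      using assms(6) y z \<open>y \<noteq> z\<close> unfolding simplicial_def by auto
  next
    case False
    then have "A x y = min_entry V A \<or> A x z = min_entry V A"
      using separation_entry_eq_min_entry[OF assms(4,5)] y z by auto
    then show ?thesis
      using simplicial_pair_if_min_entry[OF assms(1)] y z \<open>y \<noteq> z\<close> by auto
  qed
qed

end
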